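(* Let $B$ and $H$ be bialgebras over a field $\mathbb{k}$ and $\langle-,-\rangle\colon B\otimes H\to\mathbb{k}$ a Hopf (bialgebra) pairing. (i) Let $I\subset B$ be a coideal and $K_H$ a set of algebra generators of $H$. If $\langle i,h\rangle=0$ for all $i\in I$ and $h\in K_H$, then $\langle i,h\rangle=0$ for all $i\in I$ and $h\in H$. (ii) Let $I\subset B$ be a biideal, $K_I\subset I$ a set of generators of $I$ as an ideal, and $K_H$ a set of generators of $H$ as an algebra. If $\langle i,h\rangle=0$ for all $i\in K_I$ and $h\in K_H$, and moreover $\Delta^2(h)\in H\otimes\mathrm{Span}_{\mathbb{k}}(K_H\cup\{1\})\otimes H$ for all $h\in K_H$, then $\langle i,h\rangle=0$ for all $i\in I$ and $h\in H$.
   Context: A Hopf (bialgebra) pairing $\langle-,-\rangle\colon B\otimes H\to\mathbb{k}$ is a bilinear form (not necessarily nondegenerate) with $\langle\Delta_B(b),h\otimes k\rangle=\langle b,hk\rangle$, $\langle b,1_H\rangle=\epsilon_B(b)$, $\langle b\otimes c,\Delta_H(h)\rangle=\langle bc,h\rangle$, $\langle 1_B,h\rangle=\epsilon_H(h)$, where pairings of tensor products are taken componentwise. A coideal $I\subset B$ is a subspace with $\Delta(I)\subset I\otimes B+B\otimes I$ and $\epsilon(I)=0$; a biideal is an ideal that is also a coideal. $\Delta^2=(\mathrm{id}\otimes\Delta)\circ\Delta\colon H\to H^{\otimes 3}$. *)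

theory Defs
  imports Main "HOL.Vector_Spaces"
begin

text \<open>
  Since no tensor product is available, an element
  of A \<otimes> A is represented by a finite list of pairs (a finite sum of elementary
  tensors); two such representations denote the same tensor iff all linear
  functionals phi \<otimes> psi agree on them (over a field, the functionals phi \<otimes> psi
  separate the points of A \<otimes> A).
\<close>

definition lin_fun :: "('k::field \<Rightarrow> 'a::ab_group_add \<Rightarrow> 'a) \<Rightarrow> ('a \<Rightarrow> 'k) \<Rightarrow> bool" where
  "lin_fun s \<phi> \<longleftrightarrow> Vector_Spaces.linear s (*) \<phi>"

definition teq2 :: "('k::field \<Rightarrow> 'a::ab_group_add \<Rightarrow> 'a) \<Rightarrow> ('a \<times> 'a) list \<Rightarrow> ('a \<times> 'a) list \<Rightarrow> bool" where
  "teq2 s xs ys \<longleftrightarrow> (\<forall>\<phi> \<psi>. lin_fun s \<phi> \<and> lin_fun s \<psi> \<longrightarrow>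
      (\<Sum>(a,b)\<leftarrow>xs. \<phi> a * \<psi> b) = (\<Sum>(a,b)\<leftarrow>ys. \<phi> a * \<psi> b))"

definition teq3 :: "('k::field \<Rightarrow> 'a::ab_group_add \<Rightarrow> 'a) \<Rightarrow> ('a \<times> 'a \<times> 'a) list \<Rightarrow> ('a \<times> 'a \<times> 'a) list \<Rightarrow> bool" where
  "teq3 s xs ys \<longleftrightarrow> (\<forall>\<phi> \<psi> \<chi>. lin_fun s \<phi> \<and> lin_fun s \<psi> \<and> lin_fun s \<chi> \<longrightarrow>
      (\<Sum>(a,b,c)\<leftarrow>xs. \<phi> a * \<psi> b * \<chi> c) = (\<Sum>(a,b,c)\<leftarrow>ys. \<phi> a * \<psi> b * \<chi> c))"

text \<open>(id \<otimes> \<Delta>) \<circ> \<Delta> and (\<Delta> \<otimes> id) \<circ> \<Delta>\<close>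
definition Delta2 :: "('a \<Rightarrow> ('a \<times> 'a) list) \<Rightarrow> 'a \<Rightarrow> ('a \<times> 'a \<times> 'a) list" where
  "Delta2 \<Delta> x = concat (map (\<lambda>(a,b). map (\<lambda>(c,d). (a,c,d)) (\<Delta> b)) (\<Delta> x))"

definition Delta2' :: "('a \<Rightarrow> ('a \<times> 'a) list) \<Rightarrow> 'a \<Rightarrow> ('a \<times> 'a \<times> 'a) list" where
  "Delta2' \<Delta> x = concat (map (\<lambda>(a,b). map (\<lambda>(c,d). (c,d,b)) (\<Delta> a)) (\<Delta> x))"

definition bialgebra :: "('k::field \<Rightarrow> 'a::ring_1 \<Rightarrow> 'a) \<Rightarrow> ('a \<Rightarrow> ('a \<times> 'a) list) \<Rightarrow> ('a \<Rightarrow> 'k) \<Rightarrow> bool" where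
  "bialgebra s \<Delta> \<epsilon> \<longleftrightarrow>
     vector_space s \<and>
     (\<forall>c x y. s c (x * y) = s c x * y \<and> s c (x * y) = x * s c y) \<and>
     lin_fun s \<epsilon> \<and> \<epsilon> 1 = 1 \<and> (\<forall>x y. \<epsilon> (x * y) = \<epsilon> x * \<epsilon> y) \<and>
     (\<forall>c x y. teq2 s (\<Delta> (s c x + y)) (map (\<lambda>(a,b). (s c a, b)) (\<Delta> x) @ \<Delta> y)) \<and>
     (\<forall>x. teq3 s (Delta2 \<Delta> x) (Delta2' \<Delta> x)) \<and>
     (\<forall>x. (\<Sum>(a,b)\<leftarrow>\<Delta> x. s (\<epsilon> a) b) = x \<and> (\<Sum>(a,b)\<leftarrow>\<Delta> x. s (\<epsilon> b) a) = x) \<and>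
     (\<forall>x y. teq2 s (\<Delta> (x * y)) (concat (map (\<lambda>(a,b). map (\<lambda>(c,d). (a * c, b * d)) (\<Delta> y)) (\<Delta> x)))) \<and>
     teq2 s (\<Delta> 1) [(1,1)]"

definition hopf_pairing ::
  "('k::field \<Rightarrow> 'b::ring_1 \<Rightarrow> 'b) \<Rightarrow> ('b \<Rightarrow> ('b \<times> 'b) list) \<Rightarrow> ('b \<Rightarrow> 'k) \<Rightarrow>
   ('k \<Rightarrow> 'h::ring_1 \<Rightarrow> 'h) \<Rightarrow> ('h \<Rightarrow> ('h \<times> 'h) list) \<Rightarrow> ('h \<Rightarrow> 'k) \<Rightarrow>
   ('b \<Rightarrow> 'h \<Rightarrow> 'k) \<Rightarrow> bool" where
  "hopf_pairing sB \<Delta>B \<epsilon>B sH \<Delta>H \<epsilon>H P \<longleftrightarrow>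
     (\<forall>h. lin_fun sB (\<lambda>b. P b h)) \<and> (\<forall>b. lin_fun sH (P b)) \<and>
     (\<forall>b h k. (\<Sum>(x,y)\<leftarrow>\<Delta>B b. P x h * P y k) = P b (h * k)) \<and>
     (\<forall>b. P b 1 = \<epsilon>B b) \<and>
     (\<forall>b c h. (\<Sum>(x,y)\<leftarrow>\<Delta>H h. P b x * P c y) = P (b * c) h) \<and>
     (\<forall>h. P 1 h = \<epsilon>H h)"

definition coideal :: "('k::field \<Rightarrow> 'a::ring_1 \<Rightarrow> 'a) \<Rightarrow> ('a \<Rightarrow> ('a \<times> 'a) list) \<Rightarrow> ('a \<Rightarrow> 'k) \<Rightarrow> 'a set \<Rightarrow> bool" where
  "coideal s \<Delta> \<epsilon> I \<longleftrightarrow> module.subspace s I \<and>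
     (\<forall>i\<in>I. \<exists>xs. teq2 s (\<Delta> i) xs \<and> (\<forall>(a,b)\<in>set xs. a \<in> I \<or> b \<in> I)) \<and>
     (\<forall>i\<in>I. \<epsilon> i = 0)"

definition alg_ideal :: "('k::field \<Rightarrow> 'a::ring_1 \<Rightarrow> 'a) \<Rightarrow> 'a set \<Rightarrow> bool" where
  "alg_ideal s I \<longleftrightarrow> module.subspace s I \<and> (\<forall>i\<in>I. \<forall>x. x * i \<in> I \<and> i * x \<in> I)"

definition biideal :: "('k::field \<Rightarrow> 'a::ring_1 \<Rightarrow> 'a) \<Rightarrow> ('a \<Rightarrow> ('a \<times> 'a) list) \<Rightarrow> ('a \<Rightarrow> 'k) \<Rightarrow> 'a set \<Rightarrow> bool" where
  "biideal s \<Delta> \<epsilon> I \<longleftrightarrow> alg_ideal s I \<and> coideal s \<Delta> \<epsilon> I"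

definition subalgebra :: "('k::field \<Rightarrow> 'a::ring_1 \<Rightarrow> 'a) \<Rightarrow> 'a set \<Rightarrow> bool" where
  "subalgebra s S \<longleftrightarrow> module.subspace s S \<and> 1 \<in> S \<and> (\<forall>x\<in>S. \<forall>y\<in>S. x * y \<in> S)"

definition generates_algebra :: "('k::field \<Rightarrow> 'a::ring_1 \<Rightarrow> 'a) \<Rightarrow> 'a set \<Rightarrow> bool" where
  "generates_algebra s K \<longleftrightarrow> \<Inter>{S. subalgebra s S \<and> K \<subseteq> S} = UNIV"

definition ideal_generated :: "('k::field \<Rightarrow> 'a::ring_1 \<Rightarrow> 'a) \<Rightarrow> 'a set \<Rightarrow> 'a set" where
  "ideal_generated s K = \<Inter>{J. alg_ideal s J \<and> K \<subseteq> J}"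

end

theory Submission
  imports Defs
begin

text \<open>
  For a coideal \<open>I\<close>, the elements of \<open>H\<close> paired to zero with all of \<open>I\<close> form a subalgebra:
  \<open>\<langle>i, hk\<rangle> = \<Sum> \<langle>i\<^sub>1, h\<rangle>\<langle>i\<^sub>2, k\<rangle>\<close> vanishes because every term of \<open>\<Delta>(i)\<close> has a tensor factor
  in \<open>I\<close>, and \<open>\<langle>i, 1\<rangle> = \<epsilon>(i) = 0\<close>.  So it suffices to kill the algebra generators of \<open>H\<close>.
  For a biideal with ideal generators \<open>K\<^sub>I\<close>, the elements \<open>b \<in> I\<close> with \<open>\<langle>b, K\<^sub>H\<rangle> = 0\<close>
  form an ideal: \<open>\<langle>xby, h\<rangle> = \<Sum> \<langle>x, h\<^sub>1\<rangle>\<langle>b, h\<^sub>2\<rangle>\<langle>y, h\<^sub>3\<rangle>\<close>, and the middle legs \<open>h\<^sub>2\<close> of \<open>\<Delta>\<^sup>2(h)\<close>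
  lie in the span of \<open>K\<^sub>H \<union> {1}\<close>, on which \<open>b\<close> vanishes.  This ideal contains \<open>K\<^sub>I\<close>,
  hence is \<open>I\<close>, and part (i) finishes the argument.
\<close>

lemma lin_fun_module_hom: "lin_fun s \<phi> \<Longrightarrow> module_hom s (*) \<phi>"
  unfolding lin_fun_def by (simp add: module_hom_iff_linear)

lemma lin_fun_module: "lin_fun s \<phi> \<Longrightarrow> module s"
  unfolding lin_fun_def linear_def by (simp add: module_iff_vector_space)

lemma lin_fun_eq_0_on_span:
  "lin_fun s \<phi> \<Longrightarrow> (\<And>x. x \<in> K \<Longrightarrow> \<phi> x = 0) \<Longrightarrow> x \<in> module.span s K \<Longrightarrow> \<phi> x = 0"
  using lin_fun_module_hom module_hom.eq_0_on_span by blast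

lemma subspace_common_zeros:
  assumes "module s" and "\<And>j. j \<in> A \<Longrightarrow> lin_fun s (\<phi> j)"
  shows "module.subspace s {x. \<forall>j\<in>A. \<phi> j x = 0}"
proof -
  have "module.subspace s {x. \<phi> j x = 0}" if "j \<in> A" for j
    using assms(2)[OF that] by (rule lin_fun_module_hom[THEN module_hom.subspace_kernel])
  then have "module.subspace s (\<Inter>j\<in>A. {x. \<phi> j x = 0})"
    by (rule module.subspace_Int[OF assms(1)])
  moreover have "(\<Inter>j\<in>A. {x. \<phi> j x = 0}) = {x. \<forall>j\<in>A. \<phi> j x = 0}" by auto
  ultimately show ?thesis by simp
qed

lemma teq2_sum_eq:
  "teq2 s xs ys \<Longrightarrow> lin_fun s \<phi> \<Longrightarrow> lin_fun s \<psi> \<Longrightarrow>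
    (\<Sum>(a,b)\<leftarrow>xs. \<phi> a * \<psi> b) = (\<Sum>(a,b)\<leftarrow>ys. \<phi> a * \<psi> b)"
  unfolding teq2_def by blast

lemma teq3_sum_eq:
  "teq3 s xs ys \<Longrightarrow> lin_fun s \<phi> \<Longrightarrow> lin_fun s \<psi> \<Longrightarrow> lin_fun s \<chi> \<Longrightarrow>
    (\<Sum>(a,b,c)\<leftarrow>xs. \<phi> a * \<psi> b * \<chi> c) = (\<Sum>(a,b,c)\<leftarrow>ys. \<phi> a * \<psi> b * \<chi> c)"
  unfolding teq3_def by blast

lemma sum_list_Delta2:
  "(\<Sum>(a,b)\<leftarrow>\<Delta> x. f a * (\<Sum>(c,d)\<leftarrow>\<Delta> b. g c * k d)) =
    (\<Sum>(a,c,d)\<leftarrow>Delta2 \<Delta> x. f a * g c * (k d :: 'k::comm_semiring_0))"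
proof -
  have "(\<Sum>(a,b)\<leftarrow>xs. f a * (\<Sum>(c,d)\<leftarrow>\<Delta> b. g c * k d)) =
    (\<Sum>(a,c,d)\<leftarrow>concat (map (\<lambda>(a,b). map (\<lambda>(c,d). (a,c,d)) (\<Delta> b)) xs). f a * g c * k d)" for xs
    by (induction xs) (auto simp: sum_list_const_mult[symmetric] mult.assoc case_prod_beta o_def)
  then show ?thesis unfolding Delta2_def .
qed

lemma sum_list_eq_0_on_set:
  "(\<And>p. p \<in> set xs \<Longrightarrow> f p = (0::'a::monoid_add)) \<Longrightarrow> sum_list (map f xs) = 0"
  by (simp cong: map_cong)

lemma generates_algebra_subalgebra_eq_UNIV:
  "generates_algebra s K \<Longrightarrow> subalgebra s S \<Longrightarrow> K \<subseteq> S \<Longrightarrow> S = UNIV"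
  unfolding generates_algebra_def by blast

lemma ideal_generated_subset:
  "alg_ideal s J \<Longrightarrow> K \<subseteq> J \<Longrightarrow> ideal_generated s K \<subseteq> J"
  unfolding ideal_generated_def by blast

context
  fixes sB :: "'k::field \<Rightarrow> 'b::ring_1 \<Rightarrow> 'b" and \<Delta>B :: "'b \<Rightarrow> ('b \<times> 'b) list" and \<epsilon>B :: "'b \<Rightarrow> 'k"
    and sH :: "'k \<Rightarrow> 'h::ring_1 \<Rightarrow> 'h" and \<Delta>H :: "'h \<Rightarrow> ('h \<times> 'h) list" and \<epsilon>H :: "'h \<Rightarrow> 'k"
    and P :: "'b \<Rightarrow> 'h \<Rightarrow> 'k"
  assumes pairing: "hopf_pairing sB \<Delta>B \<epsilon>B sH \<Delta>H \<epsilon>H P"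
begin

lemma pairing_linear_left: "lin_fun sB (\<lambda>b. P b h)"
  using pairing unfolding hopf_pairing_def by blast

lemma pairing_linear_right: "lin_fun sH (P b)"
  using pairing unfolding hopf_pairing_def by blast

lemma pairing_one_right: "P b 1 = \<epsilon>B b"
  using pairing unfolding hopf_pairing_def by blast

lemma pairing_mult_right:
  assumes "teq2 sB (\<Delta>B b) xs"
  shows "P b (h * k) = (\<Sum>(x,y)\<leftarrow>xs. P x h * P y k)"
proof -
  have "P b (h * k) = (\<Sum>(x,y)\<leftarrow>\<Delta>B b. P x h * P y k)"
    using pairing unfolding hopf_pairing_def by simp
  also have "\<dots> = (\<Sum>(x,y)\<leftarrow>xs. P x h * P y k)"
    using teq2_sum_eq[OF assms pairing_linear_left pairing_linear_left] .
  finally show ?thesis .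
qed

lemma pairing_triple_mult_left:
  assumes "teq3 sH (Delta2 \<Delta>H h) ts"
  shows "P (x * b * y) h = (\<Sum>(a,c,d)\<leftarrow>ts. P x a * P b c * P y d)"
proof -
  have mult_left: "P (u * v) g = (\<Sum>(a,c)\<leftarrow>\<Delta>H g. P u a * P v c)" for u v g
    using pairing unfolding hopf_pairing_def by simp
  have "P (x * b * y) h = (\<Sum>(a,e)\<leftarrow>\<Delta>H h. P x a * (\<Sum>(c,d)\<leftarrow>\<Delta>H e. P b c * P y d))"
    by (simp add: mult.assoc mult_left)
  also have "\<dots> = (\<Sum>(a,c,d)\<leftarrow>Delta2 \<Delta>H h. P x a * P b c * P y d)"
    by (rule sum_list_Delta2)
  also have "\<dots> = (\<Sum>(a,c,d)\<leftarrow>ts. P x a * P b c * P y d)"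
    using teq3_sum_eq[OF assms pairing_linear_right pairing_linear_right pairing_linear_right] .
  finally show ?thesis .
qed

lemma coideal_annihilator_subalgebra:
  assumes I: "coideal sB \<Delta>B \<epsilon>B I"
  shows "subalgebra sH {h. \<forall>i\<in>I. P i h = 0}" (is "subalgebra sH ?S")
  unfolding subalgebra_def
proof (intro conjI ballI)
  show "module.subspace sH ?S"
    by (intro subspace_common_zeros[OF lin_fun_module[OF pairing_linear_right]] pairing_linear_right)
  show "1 \<in> ?S"
    using I by (simp add: coideal_def pairing_one_right)
next
  fix h k assume h: "h \<in> ?S" and k: "k \<in> ?S"
  have "P i (h * k) = 0" if i: "i \<in> I" for i
  proof -
    obtain xs where \<Delta>i: "teq2 sB (\<Delta>B i) xs" and xs: "\<forall>(a,b)\<in>set xs. a \<in> I \<or> b \<in> I"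
      using I i unfolding coideal_def by blast
    from \<Delta>i have "P i (h * k) = (\<Sum>(x,y)\<leftarrow>xs. P x h * P y k)"
      by (rule pairing_mult_right)
    also have "\<dots> = 0"
      by (rule sum_list_eq_0_on_set) (use xs h k in auto)
    finally show ?thesis .
  qed
  then show "h * k \<in> ?S" by simp
qed

lemma coideal_pairing_vanishes:
  assumes "coideal sB \<Delta>B \<epsilon>B I" and "generates_algebra sH KH"
    and "\<forall>i\<in>I. \<forall>h\<in>KH. P i h = 0" and "i \<in> I"
  shows "P i h = 0"
proof -
  have "{h. \<forall>i\<in>I. P i h = 0} = UNIV"
    using generates_algebra_subalgebra_eq_UNIV[OF assms(2) coideal_annihilator_subalgebra[OF assms(1)]]
      assms(3) by blast
  with \<open>i \<in> I\<close> show ?thesis by blast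
qed

lemma biideal_annihilator_of_generators_ideal:
  assumes I: "biideal sB \<Delta>B \<epsilon>B I"
    and Delta2_KH: "\<forall>h\<in>KH. \<exists>ts. teq3 sH (Delta2 \<Delta>H h) ts \<and>
            (\<forall>(a,c,d)\<in>set ts. c \<in> module.span sH (insert 1 KH))"
  shows "alg_ideal sB {b \<in> I. \<forall>h\<in>KH. P b h = 0}" (is "alg_ideal sB ?J")
proof -
  have I_ideal: "alg_ideal sB I" and I_counit: "\<forall>i\<in>I. \<epsilon>B i = 0"
    using I unfolding biideal_def coideal_def by blast+
  have triple: "P (x * b * y) h = 0" if b: "b \<in> ?J" and h: "h \<in> KH" for x b y h
  proof -
    obtain ts where "teq3 sH (Delta2 \<Delta>H h) ts"
      and ts: "\<forall>(a,c,d)\<in>set ts. c \<in> module.span sH (insert 1 KH)"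
      using Delta2_KH h by blast
    have b_span: "P b c = 0" if "c \<in> module.span sH (insert 1 KH)" for c
    proof (rule lin_fun_eq_0_on_span[OF pairing_linear_right _ that])
      show "P b z = 0" if "z \<in> insert 1 KH" for z
        using that b I_counit by (auto simp: pairing_one_right)
    qed
    from \<open>teq3 sH (Delta2 \<Delta>H h) ts\<close>
    have "P (x * b * y) h = (\<Sum>(a,c,d)\<leftarrow>ts. P x a * P b c * P y d)"
      by (rule pairing_triple_mult_left)
    also have "\<dots> = 0"
      by (rule sum_list_eq_0_on_set) (use ts b_span in auto)
    finally show ?thesis .
  qed
  have "module.subspace sB (I \<inter> {b. \<forall>h\<in>KH. P b h = 0})"
    using I_ideal unfolding alg_ideal_def
    by (intro module.subspace_inter subspace_common_zeros[OF lin_fun_module[OF pairing_linear_left]]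
        lin_fun_module[OF pairing_linear_left] pairing_linear_left) auto
  then have "module.subspace sB ?J"
    by (simp add: Collect_conj_eq)
  moreover have "x * i \<in> ?J \<and> i * x \<in> ?J" if "i \<in> ?J" for i x
    using that I_ideal triple[where b=i and x=1 and y=x] triple[where b=i and x=x and y=1]
    unfolding alg_ideal_def by auto
  ultimately show ?thesis
    unfolding alg_ideal_def by blast
qed

lemma biideal_pairing_vanishes:
  assumes I: "biideal sB \<Delta>B \<epsilon>B I" and "KI \<subseteq> I" and "ideal_generated sB KI = I"
    and KH: "generates_algebra sH KH"
    and "\<forall>i\<in>KI. \<forall>h\<in>KH. P i h = 0"
    and "\<forall>h\<in>KH. \<exists>ts. teq3 sH (Delta2 \<Delta>H h) ts \<and>
            (\<forall>(a,c,d)\<in>set ts. c \<in> module.span sH (insert 1 KH))"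
    and "i \<in> I"
  shows "P i h = 0"
proof (rule coideal_pairing_vanishes[OF _ KH _ \<open>i \<in> I\<close>])
  show "coideal sB \<Delta>B \<epsilon>B I"
    using I unfolding biideal_def by blast
  have "I \<subseteq> {b \<in> I. \<forall>h\<in>KH. P b h = 0}"
    using assms ideal_generated_subset[OF biideal_annihilator_of_generators_ideal, of I KH KI]
    by blast
  then show "\<forall>i\<in>I. \<forall>h\<in>KH. P i h = 0" by blast
qed

end

theorem lemma2p1:
  fixes sB :: "'k::field \<Rightarrow> 'b::ring_1 \<Rightarrow> 'b" and \<Delta>B :: "'b \<Rightarrow> ('b \<times> 'b) list" and \<epsilon>B :: "'b \<Rightarrow> 'k"
    and sH :: "'k \<Rightarrow> 'h::ring_1 \<Rightarrow> 'h" and \<Delta>H :: "'h \<Rightarrow> ('h \<times> 'h) list" and \<epsilon>H :: "'h \<Rightarrow> 'k"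
    and P :: "'b \<Rightarrow> 'h \<Rightarrow> 'k"
  assumes "bialgebra sB \<Delta>B \<epsilon>B"
    and "bialgebra sH \<Delta>H \<epsilon>H"
    and "hopf_pairing sB \<Delta>B \<epsilon>B sH \<Delta>H \<epsilon>H P"
  shows
    "(\<forall>I KH. coideal sB \<Delta>B \<epsilon>B I \<and> generates_algebra sH KH \<and>
        (\<forall>i\<in>I. \<forall>h\<in>KH. P i h = 0)
        \<longrightarrow> (\<forall>i\<in>I. \<forall>h. P i h = 0))
     \<and>
     (\<forall>I KI KH. biideal sB \<Delta>B \<epsilon>B I \<and> KI \<subseteq> I \<and> ideal_generated sB KI = I \<and>
        generates_algebra sH KH \<and>
        (\<forall>i\<in>KI. \<forall>h\<in>KH. P i h = 0) \<and>
        (\<forall>h\<in>KH. \<exists>ts. teq3 sH (Delta2 \<Delta>H h) ts \<and>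
            (\<forall>(a,c,d)\<in>set ts. c \<in> module.span sH (insert 1 KH)))
        \<longrightarrow> (\<forall>i\<in>I. \<forall>h. P i h = 0))"
  using coideal_pairing_vanishes[OF assms(3)] biideal_pairing_vanishes[OF assms(3)]
  by blast

end
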